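(* Let $k$ be a field and $(\mathfrak{n},\{\,,\})$ a Lie algebra over $k$ which is a direct vector space sum $\mathfrak{n}=\mathfrak{a}\oplus\mathfrak{b}$ of two subalgebras $\mathfrak{a},\mathfrak{b}$. Define a bracket on the underlying space by $[a+b,a'+b']=\{a,a'\}-\{b,b'\}$ for $a,a'\in\mathfrak{a}$, $b,b'\in\mathfrak{b}$. Then $\mathfrak{g}=(\mathfrak{a}\oplus\mathfrak{b},[\,,])$ is a Lie algebra, and the product $(a+b)\cdot(a'+b')=-\{b,a'+b'\}$ is a post-Lie algebra structure on $(\mathfrak{g},\mathfrak{n})$.
   Context: A post-Lie algebra structure on a pair of Lie algebras $\mathfrak{g}=(V,[\,,])$, $\mathfrak{n}=(V,\{\,,\})$ on the same vector space $V$ is a bilinear product $x\cdot y$ on $V$ satisfying, for all $x,y,z\in V$: (1) $x\cdot y-y\cdot x=[x,y]-\{x,y\}$; (2) $[x,y]\cdot z=x\cdot(y\cdot z)-y\cdot(x\cdot z)$; (3) $x\cdot\{y,z\}=\{x\cdot y,z\}+\{y,x\cdot z\}$. *)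

theory Defs
  imports Complex_Main
begin

definition bilinear_map ::
  "('k::field \<Rightarrow> 'v::ab_group_add \<Rightarrow> 'v) \<Rightarrow> ('v \<Rightarrow> 'v \<Rightarrow> 'v) \<Rightarrow> bool" where
  "bilinear_map scale f \<longleftrightarrow>
     (\<forall>x y z. f (x + y) z = f x z + f y z) \<and>
     (\<forall>x y z. f x (y + z) = f x y + f x z) \<and>
     (\<forall>c x y. f (scale c x) y = scale c (f x y)) \<and>
     (\<forall>c x y. f x (scale c y) = scale c (f x y))"

definition lie_algebra ::
  "('k::field \<Rightarrow> 'v::ab_group_add \<Rightarrow> 'v) \<Rightarrow> ('v \<Rightarrow> 'v \<Rightarrow> 'v) \<Rightarrow> bool" where
  "lie_algebra scale br \<longleftrightarrow>
     vector_space scale \<and> bilinear_map scale br \<and>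
     (\<forall>x. br x x = 0) \<and>
     (\<forall>x y z. br x (br y z) + br y (br z x) + br z (br x y) = 0)"

definition lie_subalgebra ::
  "('k::field \<Rightarrow> 'v::ab_group_add \<Rightarrow> 'v) \<Rightarrow> ('v \<Rightarrow> 'v \<Rightarrow> 'v) \<Rightarrow> 'v set \<Rightarrow> bool" where
  "lie_subalgebra scale br S \<longleftrightarrow>
     module.subspace scale S \<and> (\<forall>x\<in>S. \<forall>y\<in>S. br x y \<in> S)"

definition direct_sum_decomp :: "'v::ab_group_add set \<Rightarrow> 'v set \<Rightarrow> bool" where
  "direct_sum_decomp A B \<longleftrightarrow> A \<inter> B = {0} \<and> (\<forall>v. \<exists>a\<in>A. \<exists>b\<in>B. v = a + b)"

text \<open>Post-Lie algebra structure on the pair (g, n) = ((V, G), (V, N)).\<close>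
definition post_lie_structure ::
  "('k::field \<Rightarrow> 'v::ab_group_add \<Rightarrow> 'v) \<Rightarrow> ('v \<Rightarrow> 'v \<Rightarrow> 'v) \<Rightarrow> ('v \<Rightarrow> 'v \<Rightarrow> 'v)
     \<Rightarrow> ('v \<Rightarrow> 'v \<Rightarrow> 'v) \<Rightarrow> bool" where
  "post_lie_structure scale G N P \<longleftrightarrow>
     lie_algebra scale G \<and> lie_algebra scale N \<and> bilinear_map scale P \<and>
     (\<forall>x y. P x y - P y x = G x y - N x y) \<and>
     (\<forall>x y z. P (G x y) z = P x (P y z) - P y (P x z)) \<and>
     (\<forall>x y z. P x (N y z) = N (P x y) z + N y (P x z))"

end

theory Submission
  imports Defs
begin

text \<open>The bracket of g is that of the direct product of a with the opposite algebra of b,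
  so g is a Lie algebra. The product is \<open>x \<cdot> y = - {\<pi> x, y}\<close> with \<open>\<pi>\<close> the projection onto b,
  which satisfies \<open>\<pi> [x, y] = - {\<pi> x, \<pi> y}\<close>. As the Jacobi identity makes each \<open>{b, -}\<close> a
  derivation of n and \<open>b \<mapsto> {b, -}\<close> a representation, \<open>x \<mapsto> - {\<pi> x, -}\<close> is a representation
  of g by derivations of n: these are the post-Lie axioms (2) and (3). Axiom (1) is a direct
  expansion along \<open>n = a \<oplus> b\<close>.\<close>

locale lie_bracket = vector_space scale
  for scale :: "'k::field \<Rightarrow> 'v::ab_group_add \<Rightarrow> 'v" +
  fixes br :: "'v \<Rightarrow> 'v \<Rightarrow> 'v"
  assumes lie_algebra: "lie_algebra scale br"
begin

lemma bracket_add_left: "br (x + y) z = br x z + br y z"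
  and bracket_add_right: "br x (y + z) = br x y + br x z"
  and bracket_scale_left: "br (scale c x) y = scale c (br x y)"
  and bracket_scale_right: "br x (scale c y) = scale c (br x y)"
  and bracket_self: "br x x = 0"
  and jacobi: "br x (br y z) + br y (br z x) + br z (br x y) = 0"
  using lie_algebra unfolding lie_algebra_def bilinear_map_def by blast+

lemma bracket_minus_left: "br (- x) y = - br x y"
  using bracket_add_left[of x "- x" y] bracket_add_left[of 0 0 y]
  by (simp add: eq_neg_iff_add_eq_0 add.commute)

lemma bracket_minus_right: "br x (- y) = - br x y"
  using bracket_add_right[of x y "- y"] bracket_add_right[of x 0 0]
  by (simp add: eq_neg_iff_add_eq_0 add.commute)

lemma bracket_anticommute: "br x y = - br y x"
proof -
  have "0 = br (x + y) (x + y)"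
    by (rule bracket_self[symmetric])
  also have "\<dots> = br x y + br y x"
    unfolding bracket_add_left bracket_add_right by (simp add: bracket_self)
  finally show ?thesis
    by (simp add: eq_neg_iff_add_eq_0)
qed

lemma bracket_leibniz: "br x (br y z) = br (br x y) z + br y (br x z)"
  using jacobi[of x y z] bracket_anticommute[of z x] bracket_anticommute[of z "br x y"]
  by (simp add: bracket_minus_right algebra_simps eq_neg_iff_add_eq_0)

end

locale direct_sum_decomposition = vector_space scale
  for scale :: "'k::field \<Rightarrow> 'v::ab_group_add \<Rightarrow> 'v" +
  fixes A B :: "'v set"
  assumes subspace_A: "subspace A"
    and subspace_B: "subspace B"
    and decomposition: "direct_sum_decomp A B"
begin

definition proj_A :: "'v \<Rightarrow> 'v" where
  "proj_A v = (SOME a. a \<in> A \<and> (\<exists>b\<in>B. v = a + b))"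

definition proj_B :: "'v \<Rightarrow> 'v" where
  "proj_B v = v - proj_A v"

lemma decomposition_unique:
  assumes "a \<in> A" "a' \<in> A" "b \<in> B" "b' \<in> B" "a + b = a' + b'"
  shows "a = a'"
proof -
  have "a - a' = b' - b"
    using assms(5) by (simp add: algebra_simps)
  moreover have "a - a' \<in> A" "b' - b \<in> B"
    using subspace_diff subspace_A subspace_B assms(1-4) by blast+
  ultimately have "a - a' \<in> A \<inter> B"
    by simp
  then show ?thesis
    using decomposition unfolding direct_sum_decomp_def by simp
qed

lemma proj_A_mem: "proj_A v \<in> A"
  and proj_B_mem: "proj_B v \<in> B"
  and proj_sum: "proj_A v + proj_B v = v"
proof -
  have "\<exists>a. a \<in> A \<and> (\<exists>b\<in>B. v = a + b)"
    using decomposition unfolding direct_sum_decomp_def by blast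
  then have "proj_A v \<in> A \<and> (\<exists>b\<in>B. v = proj_A v + b)"
    unfolding proj_A_def by (rule someI_ex)
  then show "proj_A v \<in> A" "proj_B v \<in> B" "proj_A v + proj_B v = v"
    unfolding proj_B_def by (metis add_diff_cancel_left')+
qed

lemma proj_A_eq: "a \<in> A \<Longrightarrow> b \<in> B \<Longrightarrow> proj_A (a + b) = a"
  using decomposition_unique[OF proj_A_mem _ proj_B_mem] proj_sum by metis

lemma proj_B_eq: "a \<in> A \<Longrightarrow> b \<in> B \<Longrightarrow> proj_B (a + b) = b"
  unfolding proj_B_def by (simp add: proj_A_eq)

lemma proj_A_add: "proj_A (x + y) = proj_A x + proj_A y"
  and proj_B_add: "proj_B (x + y) = proj_B x + proj_B y"
proof -
  have "x + y = (proj_A x + proj_A y) + (proj_B x + proj_B y)"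
    using proj_sum[of x] proj_sum[of y] by (simp add: algebra_simps)
  moreover have "proj_A x + proj_A y \<in> A" "proj_B x + proj_B y \<in> B"
    using subspace_add subspace_A subspace_B proj_A_mem proj_B_mem by blast+
  ultimately show "proj_A (x + y) = proj_A x + proj_A y" "proj_B (x + y) = proj_B x + proj_B y"
    using proj_A_eq proj_B_eq by simp_all
qed

lemma proj_A_scale: "proj_A (scale c x) = scale c (proj_A x)"
  and proj_B_scale: "proj_B (scale c x) = scale c (proj_B x)"
proof -
  have "scale c x = scale c (proj_A x) + scale c (proj_B x)"
    using proj_sum[of x] scale_right_distrib by metis
  moreover have "scale c (proj_A x) \<in> A" "scale c (proj_B x) \<in> B"
    using subspace_scale subspace_A subspace_B proj_A_mem proj_B_mem by blast+
  ultimately show "proj_A (scale c x) = scale c (proj_A x)" "proj_B (scale c x) = scale c (proj_B x)"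
    using proj_A_eq proj_B_eq by simp_all
qed

end

locale lie_split = lie_bracket scale br + direct_sum_decomposition scale A B
  for scale :: "'k::field \<Rightarrow> 'v::ab_group_add \<Rightarrow> 'v" and br A B +
  assumes bracket_closed_A: "x \<in> A \<Longrightarrow> y \<in> A \<Longrightarrow> br x y \<in> A"
    and bracket_closed_B: "x \<in> B \<Longrightarrow> y \<in> B \<Longrightarrow> br x y \<in> B"
begin

definition split_bracket :: "'v \<Rightarrow> 'v \<Rightarrow> 'v" where
  "split_bracket x y = br (proj_A x) (proj_A y) - br (proj_B x) (proj_B y)"

definition split_product :: "'v \<Rightarrow> 'v \<Rightarrow> 'v" where
  "split_product x y = - br (proj_B x) y"

lemma eq_split_bracket:
  assumes "\<And>a a' b b'. a \<in> A \<Longrightarrow> a' \<in> A \<Longrightarrow> b \<in> B \<Longrightarrow> b' \<in> B \<Longrightarrow>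
    G (a + b) (a' + b') = br a a' - br b b'"
  shows "G = split_bracket"
proof (intro ext)
  fix x y
  have "G x y = G (proj_A x + proj_B x) (proj_A y + proj_B y)"
    by (simp add: proj_sum)
  also have "\<dots> = split_bracket x y"
    unfolding split_bracket_def by (rule assms; rule proj_A_mem proj_B_mem)
  finally show "G x y = split_bracket x y" .
qed

lemma eq_split_product:
  assumes "\<And>a a' b b'. a \<in> A \<Longrightarrow> a' \<in> A \<Longrightarrow> b \<in> B \<Longrightarrow> b' \<in> B \<Longrightarrow>
    P (a + b) (a' + b') = - br b (a' + b')"
  shows "P = split_product"
proof (intro ext)
  fix x y
  have "P x y = P (proj_A x + proj_B x) (proj_A y + proj_B y)"
    by (simp add: proj_sum)
  also have "\<dots> = - br (proj_B x) (proj_A y + proj_B y)"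
    by (rule assms; rule proj_A_mem proj_B_mem)
  also have "\<dots> = split_product x y"
    by (simp add: split_product_def proj_sum)
  finally show "P x y = split_product x y" .
qed

lemma proj_A_split_bracket: "proj_A (split_bracket x y) = br (proj_A x) (proj_A y)"
  and proj_B_split_bracket: "proj_B (split_bracket x y) = - br (proj_B x) (proj_B y)"
proof -
  have "br (proj_A x) (proj_A y) \<in> A" "- br (proj_B x) (proj_B y) \<in> B"
    using bracket_closed_A bracket_closed_B subspace_neg subspace_B proj_A_mem proj_B_mem
    by blast+
  moreover have "split_bracket x y = br (proj_A x) (proj_A y) + - br (proj_B x) (proj_B y)"
    by (simp add: split_bracket_def)
  ultimately show "proj_A (split_bracket x y) = br (proj_A x) (proj_A y)"
    "proj_B (split_bracket x y) = - br (proj_B x) (proj_B y)"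
    by (simp_all only: proj_A_eq proj_B_eq)
qed

lemma lie_algebra_split_bracket: "lie_algebra scale split_bracket"
  unfolding lie_algebra_def
proof (intro conjI allI)
  show "vector_space scale"
    by unfold_locales
  show "bilinear_map scale split_bracket"
    unfolding bilinear_map_def split_bracket_def
    by (simp add: proj_A_add proj_B_add proj_A_scale proj_B_scale bracket_add_left
        bracket_add_right bracket_scale_left bracket_scale_right scale_right_diff_distrib
        algebra_simps)
  show "split_bracket x x = 0" for x
    by (simp add: split_bracket_def bracket_self)
  show "split_bracket x (split_bracket y z) + split_bracket y (split_bracket z x)
      + split_bracket z (split_bracket x y) = 0" for x y z
    using jacobi[of "proj_A x" "proj_A y" "proj_A z"] jacobi[of "proj_B x" "proj_B y" "proj_B z"]
    by (simp add: split_bracket_def[of _ "split_bracket _ _"] proj_A_split_bracket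
        proj_B_split_bracket bracket_minus_right algebra_simps)
qed

lemma bilinear_split_product: "bilinear_map scale split_product"
  unfolding bilinear_map_def split_product_def
  by (simp add: proj_B_add proj_B_scale bracket_add_left bracket_add_right bracket_scale_left
      bracket_scale_right)

lemma split_product_commutator:
  "split_product x y - split_product y x = split_bracket x y - br x y"
proof -
  have "br x y = br (proj_A x + proj_B x) (proj_A y + proj_B y)"
    by (simp add: proj_sum)
  moreover have "br (proj_B x) y = br (proj_B x) (proj_A y + proj_B y)"
    "br (proj_B y) x = br (proj_B y) (proj_A x + proj_B x)"
    by (simp_all add: proj_sum)
  ultimately show ?thesis
    using bracket_anticommute[of "proj_B y" "proj_A x"] bracket_anticommute[of "proj_B y" "proj_B x"]
    by (simp add: split_product_def split_bracket_def bracket_add_left bracket_add_right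
        algebra_simps)
qed

lemma post_lie_split: "post_lie_structure scale split_bracket br split_product"
  unfolding post_lie_structure_def
proof (intro conjI allI)
  show "lie_algebra scale split_bracket"
    by (rule lie_algebra_split_bracket)
  show "lie_algebra scale br"
    by (rule lie_algebra)
  show "bilinear_map scale split_product"
    by (rule bilinear_split_product)
  show "split_product x y - split_product y x = split_bracket x y - br x y" for x y
    by (rule split_product_commutator)
  show "split_product (split_bracket x y) z
      = split_product x (split_product y z) - split_product y (split_product x z)" for x y z
    using bracket_leibniz[of "proj_B x" "proj_B y" z]
    by (simp add: split_product_def proj_B_split_bracket bracket_minus_left bracket_minus_right
        algebra_simps)
  show "split_product x (br y z) = br (split_product x y) z + br y (split_product x z)" for x y z
    using bracket_leibniz[of "proj_B x" y z]
    by (simp add: split_product_def bracket_minus_left bracket_minus_right algebra_simps)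
qed

end

theorem proposition2p14:
  fixes scale :: "'k::field \<Rightarrow> 'v::ab_group_add \<Rightarrow> 'v"
    and N G P :: "'v \<Rightarrow> 'v \<Rightarrow> 'v"
    and A B :: "'v set"
  assumes "lie_algebra scale N"
    and "lie_subalgebra scale N A"
    and "lie_subalgebra scale N B"
    and "direct_sum_decomp A B"
    and "\<And>a a' b b'. a \<in> A \<Longrightarrow> a' \<in> A \<Longrightarrow> b \<in> B \<Longrightarrow> b' \<in> B \<Longrightarrow>
           G (a + b) (a' + b') = N a a' - N b b'"
    and "\<And>a a' b b'. a \<in> A \<Longrightarrow> a' \<in> A \<Longrightarrow> b \<in> B \<Longrightarrow> b' \<in> B \<Longrightarrow>
           P (a + b) (a' + b') = - N b (a' + b')"
  shows "lie_algebra scale G \<and> post_lie_structure scale G N P"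
proof -
  interpret lie_split scale N A B
    using assms(1-4) unfolding lie_split_def lie_split_axioms_def lie_bracket_def lie_bracket_axioms_def
      direct_sum_decomposition_def direct_sum_decomposition_axioms_def lie_subalgebra_def
      lie_algebra_def
    by blast
  have "G = split_bracket"
    using assms(5) by (rule eq_split_bracket)
  moreover have "P = split_product"
    using assms(6) by (rule eq_split_product)
  ultimately show ?thesis
    using lie_algebra_split_bracket post_lie_split by simp
qed

end
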